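(* Let $n\ge1$ and $1\le r\le n$ be integers, let $f:\mathbb{I}_n^r\to\mathbb{R}^+$ be an arbitrary function, and let $X$ be a real number with $X>\max_{J,J'\in\mathbb{I}_n^r}|f(J)-f(J')|$. Then the function $\tilde f:\mathbb{I}_n^r\to\mathbb{R}^+$ defined by $\tilde f(J)=|J|(n-|J|)X+|J|f(J)$ is graded.
   Context: $\mathbb{R}^+$ denotes the positive reals. For integers $i\le j$, $[i:j]=\{i,\dots,j\}$. For integers $r\le n$, $\mathbb{I}_n^r=\{[i:j]:1\le i\le j\le n,\ j<i+r\}$. A function $f:\mathbb{I}_n^r\to\mathbb{R}^+$ is graded if for all $J,J'\in\mathbb{I}_n^r$ with $|J|<|J'|$ one has $f(J)/|J|>f(J')/|J'|$. *)

theory Defs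
  imports "HOL-Analysis.Analysis"
begin

text \<open>An interval [i:j] of integers is represented by the pair (i,j) of naturals.\<close>

definition intervals :: "nat \<Rightarrow> nat \<Rightarrow> (nat \<times> nat) set" where
  "intervals n r = {(i, j). 1 \<le> i \<and> i \<le> j \<and> j \<le> n \<and> j < i + r}"

definition ilen :: "nat \<times> nat \<Rightarrow> nat" where
  "ilen J = card {fst J..snd J}"

definition graded :: "nat \<Rightarrow> nat \<Rightarrow> (nat \<times> nat \<Rightarrow> real) \<Rightarrow> bool" where
  "graded n r f \<longleftrightarrow> (\<forall>J\<in>intervals n r. \<forall>J'\<in>intervals n r.
      ilen J < ilen J' \<longrightarrow> f J / real (ilen J) > f J' / real (ilen J'))"

end

theory Submission
  imports Defs
begin

text \<open>Dividing by \<open>|J|\<close> turns the modified function into \<open>(n - |J|) X + f J\<close>. A longer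
  interval loses at least \<open>X\<close> in the first summand, which the oscillation of \<open>f\<close>,
  being less than \<open>X\<close>, cannot make up.\<close>

lemma ilen_intervals_bounds:
  assumes "J \<in> intervals n r"
  shows "1 \<le> ilen J" and "ilen J \<le> n"
  using assms by (cases J; auto simp: intervals_def ilen_def)+

lemma oscillation_bound_pos:
  assumes "J \<in> A" and "\<forall>J\<in>A. \<forall>J'\<in>A. X > \<bar>f J - f J' :: real\<bar>"
  shows "X > 0"
  using assms by (metis abs_ge_zero order_le_less_trans)

lemma length_weighted_pos:
  fixes X y :: real
  assumes "1 \<le> k" and "X > 0" and "y > 0"
  shows "real k * real (n - k) * X + real k * y > 0"
  using assms by (simp add: add_nonneg_pos)

lemma length_weighted_div:
  fixes X y :: real
  assumes "1 \<le> k"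
  shows "(real k * real (n - k) * X + real k * y) / real k = real (n - k) * X + y"
  using assms by (simp add: field_simps)

lemma shifted_value_strict_anti:
  fixes X y y' :: real
  assumes "k < k'" and "k' \<le> n" and "\<bar>y - y'\<bar> < X"
  shows "real (n - k') * X + y' < real (n - k) * X + y"
proof -
  have "X > 0" using assms(3) by linarith
  moreover have "real (n - k) - real (n - k') \<ge> 1" using assms(1,2) by simp
  ultimately have "(real (n - k) - real (n - k')) * X \<ge> 1 * X"
    by (intro mult_right_mono) auto
  then show ?thesis using assms(3) by (simp add: left_diff_distrib)
qed

theorem lemma6p4:
  fixes n r :: nat and f :: "nat \<times> nat \<Rightarrow> real" and X :: real
  assumes "1 \<le> n" and "1 \<le> r" and "r \<le> n"
    and "\<forall>J\<in>intervals n r. f J > 0"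
    and "\<forall>J\<in>intervals n r. \<forall>J'\<in>intervals n r. X > \<bar>f J - f J'\<bar>"
  shows "(\<forall>J\<in>intervals n r.
            real (ilen J) * real (n - ilen J) * X + real (ilen J) * f J > 0)
       \<and> graded n r (\<lambda>J. real (ilen J) * real (n - ilen J) * X + real (ilen J) * f J)"
proof
  show "\<forall>J\<in>intervals n r.
            real (ilen J) * real (n - ilen J) * X + real (ilen J) * f J > 0"
  proof
    fix J assume J: "J \<in> intervals n r"
    show "real (ilen J) * real (n - ilen J) * X + real (ilen J) * f J > 0"
      using ilen_intervals_bounds(1)[OF J] oscillation_bound_pos[OF J assms(5)] assms(4) J
      by (intro length_weighted_pos) auto
  qed
next
  show "graded n r (\<lambda>J. real (ilen J) * real (n - ilen J) * X + real (ilen J) * f J)"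
    unfolding graded_def
  proof (intro ballI impI)
    fix J J' assume J: "J \<in> intervals n r" and J': "J' \<in> intervals n r"
      and "ilen J < ilen J'"
    then have "real (n - ilen J') * X + f J' < real (n - ilen J) * X + f J"
      using assms(5) ilen_intervals_bounds(2)[OF J'] by (intro shifted_value_strict_anti) auto
    then show "(real (ilen J') * real (n - ilen J') * X + real (ilen J') * f J') / real (ilen J')
         < (real (ilen J) * real (n - ilen J) * X + real (ilen J) * f J) / real (ilen J)"
      using ilen_intervals_bounds(1)[OF J] ilen_intervals_bounds(1)[OF J']
      by (simp only: length_weighted_div)
  qed
qed

end
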